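(* Let $k\ge1$ and $W\in\mathbb{R}^{m\times n}$ with $\mathrm{rank}(W)\le k$. Define $$\mathcal{F}_k(W)=\min_{\substack{U\in\mathbb{R}^{m\times k},\,V\in\mathbb{R}^{n\times k}\\ UV^\top=W}}\sum_{j=1}^k\|u_j\|_2^2\,\|v_j\|_2^2,$$ where $u_j,v_j$ are the $j$-th columns of $U,V$. Then $\mathcal{F}_k(W)=\frac1k\|W\|_\star^2$. Moreover, any minimizer $(U,V)$ satisfies $\|u_j\|_2\|v_j\|_2=\frac1k\|W\|_\star$ for all $j\in\{1,\dots,k\}$ and $\sum_{j=1}^k\|u_j\|_2\|v_j\|_2=\|W\|_\star$.
   Context: $\|\cdot\|_\star$ denotes the nuclear norm (sum of singular values); $\|\cdot\|_2$ the Euclidean norm. *)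

theory Defs
  imports "HOL-Analysis.Analysis"
begin

definition outer :: "real^'m \<Rightarrow> real^'n \<Rightarrow> real^'n^'m" where
  "outer p q = (\<chi> i j. p $ i * q $ j)"

definition is_svd :: "real^'n^'m \<Rightarrow> nat \<Rightarrow> (nat \<Rightarrow> real) \<Rightarrow> (nat \<Rightarrow> real^'m) \<Rightarrow> (nat \<Rightarrow> real^'n) \<Rightarrow> bool" where
  "is_svd W r s P Q \<longleftrightarrow>
     (\<forall>i<r. s i > 0) \<and>
     (\<forall>i<r. \<forall>j<r. P i \<bullet> P j = (if i = j then 1 else 0)) \<and>
     (\<forall>i<r. \<forall>j<r. Q i \<bullet> Q j = (if i = j then 1 else 0)) \<and>
     W = (\<Sum>i<r. s i *\<^sub>R outer (P i) (Q i))"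

definition nuclear_norm :: "real^'n^'m \<Rightarrow> real" where
  "nuclear_norm W = (THE t. \<exists>r s P Q. is_svd W r s P Q \<and> t = (\<Sum>i<r. s i))"

definition obj :: "real^'k^'m \<Rightarrow> real^'k^'n \<Rightarrow> real" where
  "obj U V = (\<Sum>j\<in>UNIV. (norm (column j U))\<^sup>2 * (norm (column j V))\<^sup>2)"

definition Fk :: "real^'n^'m \<Rightarrow> ('k::finite) itself \<Rightarrow> real" where
  "Fk W _ = Inf {obj (U :: real^'k^'m) (V :: real^'k^'n) | U V. U ** transpose V = W}"

end

(*
  Pairing a factorization W = sum_j u_j v_j^T with a singular value decomposition
  W = sum_i s_i p_i q_i^T gives ||W||_* = sum_i p_i^T W q_i <= sum_j |u_j| |v_j|, by
  Cauchy-Schwarz and Bessel's inequality (applied to two SVDs, this also shows that the nuclear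
  norm is well defined). Cauchy-Schwarz in R^k then yields
  sum_j |u_j|^2 |v_j|^2 >= (sum_j |u_j| |v_j|)^2 / k >= ||W||_*^2 / k, with equality only if
  every product |u_j| |v_j| equals ||W||_* / k.

  The bound is attained: the factors sqrt(s_i) p_i, sqrt(s_i) q_i, padded with zeros to k
  columns, have equal Gram matrices, and a plane rotation of two columns of both factors
  preserves U V^T as well as this balance. By the intermediate value theorem such a rotation can
  move the squared norm of one more column to the mean ||W||_* / k, and in a balanced pair
  |u_j| |v_j| = |u_j|^2.

  The SVD itself is obtained by splitting off a maximiser of |W x| on the unit sphere, which
  lowers the rank.
*)

theory Submission
  imports Defs
begin

lemma linear_le_quadratic_imp_zero:
  fixes b c :: real
  assumes "\<forall>t. 2 * t * b \<le> t\<^sup>2 * c"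
  shows "b = 0"
proof (rule ccontr)
  assume "b \<noteq> 0"
  define d where "d = \<bar>c\<bar> + 1"
  have "d > 0" by (simp add: d_def)
  have "2 * (b / d) * b * d\<^sup>2 \<le> (b / d)\<^sup>2 * c * d\<^sup>2"
    using assms[rule_format, of "b / d"] by (rule mult_right_mono) simp
  also have "\<dots> \<le> b\<^sup>2 * \<bar>c\<bar>"
    using \<open>d > 0\<close> by (simp add: power_divide mult_left_mono)
  finally have "2 * b\<^sup>2 * d \<le> b\<^sup>2 * \<bar>c\<bar>"
    using \<open>d > 0\<close> by (simp add: power2_eq_square)
  then have "2 * d \<le> \<bar>c\<bar>"
    using \<open>b \<noteq> 0\<close> by simp
  then show False by (simp add: d_def)
qed

lemma exists_above_and_below_mean:
  fixes f :: "'k::finite \<Rightarrow> real"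
  assumes "(\<Sum>j\<in>UNIV. f j) = real CARD('k) * \<mu>" and "f j0 \<noteq> \<mu>"
  shows "\<exists>a b. \<mu> < f a \<and> f b < \<mu>"
proof -
  have const_if_below: "g j0 = \<mu>'" if "\<forall>j. g j \<le> \<mu>'" and "(\<Sum>j\<in>UNIV. g j) = real CARD('k) * \<mu>'"
    for g :: "'k \<Rightarrow> real" and \<mu>'
  proof -
    have "(\<Sum>j\<in>UNIV. \<mu>' - g j) = 0"
      using that(2) by (simp add: sum_subtractf)
    then show ?thesis
      using that(1) by (subst (asm) sum_nonneg_eq_0_iff) auto
  qed
  have "\<exists>a. \<mu> < f a"
  proof (rule ccontr)
    assume "\<nexists>a. \<mu> < f a"
    then have "f j0 = \<mu>"
      using const_if_below[of f \<mu>] assms(1) by (simp add: not_less)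
    with assms(2) show False ..
  qed
  moreover have "\<exists>b. f b < \<mu>"
  proof (rule ccontr)
    assume "\<nexists>b. f b < \<mu>"
    then have "- f j0 = - \<mu>"
      using const_if_below[of "\<lambda>j. - f j" "- \<mu>"] assms(1) by (simp add: not_less sum_negf)
    with assms(2) show False by simp
  qed
  ultimately show ?thesis by blast
qed

lemma sum_power2_diff_const:
  fixes a :: "'k::finite \<Rightarrow> real"
  shows "(\<Sum>j\<in>UNIV. (a j - m)\<^sup>2) = (\<Sum>j\<in>UNIV. (a j)\<^sup>2) - 2 * m * (\<Sum>j\<in>UNIV. a j) + real CARD('k) * m\<^sup>2"
proof -
  have "(\<Sum>j\<in>UNIV. (a j - m)\<^sup>2) = (\<Sum>j\<in>UNIV. (a j)\<^sup>2 - 2 * m * a j + m\<^sup>2)"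
    by (simp add: power2_diff algebra_simps)
  also have "\<dots> = (\<Sum>j\<in>UNIV. (a j)\<^sup>2) - 2 * m * (\<Sum>j\<in>UNIV. a j) + real CARD('k) * m\<^sup>2"
    by (simp add: sum.distrib sum_subtractf sum_distrib_left)
  finally show ?thesis .
qed

lemma square_div_card_le_sum_power2:
  fixes a :: "'k::finite \<Rightarrow> real"
  assumes "0 \<le> S" and "S \<le> (\<Sum>j\<in>UNIV. a j)"
  shows "(\<Sum>j\<in>UNIV. (a j - S / real CARD('k))\<^sup>2) \<le> (\<Sum>j\<in>UNIV. (a j)\<^sup>2) - S\<^sup>2 / real CARD('k)"
    and "S\<^sup>2 / real CARD('k) \<le> (\<Sum>j\<in>UNIV. (a j)\<^sup>2)"
proof -
  let ?K = "real CARD('k)"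
  have "2 * (S / ?K) * S \<le> 2 * (S / ?K) * (\<Sum>j\<in>UNIV. a j)"
    using assms by (intro mult_left_mono) auto
  moreover have "?K * (S / ?K)\<^sup>2 = S\<^sup>2 / ?K" and "2 * (S / ?K) * S = 2 * (S\<^sup>2 / ?K)"
    by (simp_all add: power2_eq_square)
  ultimately show "(\<Sum>j\<in>UNIV. (a j - S / ?K)\<^sup>2) \<le> (\<Sum>j\<in>UNIV. (a j)\<^sup>2) - S\<^sup>2 / ?K"
    unfolding sum_power2_diff_const by linarith
  moreover have "0 \<le> (\<Sum>j\<in>UNIV. (a j - S / ?K)\<^sup>2)"
    by (simp add: sum_nonneg)
  ultimately show "S\<^sup>2 / ?K \<le> (\<Sum>j\<in>UNIV. (a j)\<^sup>2)"
    by linarith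
qed

lemma sum_power2_eq_square_div_card_imp_const:
  fixes a :: "'k::finite \<Rightarrow> real"
  assumes "0 \<le> S" and "S \<le> (\<Sum>j\<in>UNIV. a j)" and "(\<Sum>j\<in>UNIV. (a j)\<^sup>2) = S\<^sup>2 / real CARD('k)"
  shows "a j = S / real CARD('k)"
proof -
  have "(\<Sum>j\<in>UNIV. (a j - S / real CARD('k))\<^sup>2) = 0"
    using square_div_card_le_sum_power2(1)[OF assms(1,2)] assms(3) by (simp add: antisym sum_nonneg)
  then have "(a j - S / real CARD('k))\<^sup>2 = 0"
    by (subst (asm) sum_nonneg_eq_0_iff) auto
  then show ?thesis by simp
qed

abbreviation orthonormal_upto :: "nat \<Rightarrow> (nat \<Rightarrow> 'a::real_inner) \<Rightarrow> bool" where
  "orthonormal_upto r P \<equiv> \<forall>i<r. \<forall>j<r. P i \<bullet> P j = (if i = j then 1 else 0)"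

lemma outer_scaleR_left: "outer (c *\<^sub>R p) q = c *\<^sub>R outer p q"
  by (simp add: outer_def vec_eq_iff)

lemma outer_scaleR_right: "outer p (c *\<^sub>R q) = c *\<^sub>R outer p q"
  by (simp add: outer_def vec_eq_iff)

lemma bilinear_outer: "bilinear outer"
  by (auto simp: bilinear_def outer_def vec_eq_iff algebra_simps intro!: linearI)

lemma bilinear_inner: "bilinear (inner :: 'a::real_inner \<Rightarrow> 'a \<Rightarrow> real)"
  by (auto simp: bilinear_def inner_add_left inner_add_right intro!: linearI)

lemma outer_matrix_vector_mult: "outer p q *v y = (q \<bullet> y) *\<^sub>R p"
  by (simp add: outer_def matrix_vector_mult_def inner_vec_def vec_eq_iff sum_distrib_left mult_ac)

lemma sum_matrix_vector_mult: "(\<Sum>i\<in>I. A i) *v y = (\<Sum>i\<in>I. A i *v y)"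
  by (induction I rule: infinite_finite_induct) (auto simp: matrix_vector_mult_add_rdistrib)

lemma matrix_mult_transpose_eq_sum_outer:
  fixes U :: "real^'k^'m" and V :: "real^'k^'n"
  shows "U ** transpose V = (\<Sum>j\<in>UNIV. outer (column j U) (column j V))"
  by (simp add: matrix_matrix_mult_def transpose_def outer_def column_def vec_eq_iff)

lemma inner_sum_orthonormal_coeff:
  assumes "orthonormal_upto r P" and "i < r"
  shows "P i \<bullet> (\<Sum>l<r. c l *\<^sub>R P l) = c i"
proof -
  have "P i \<bullet> (\<Sum>l<r. c l *\<^sub>R P l) = (\<Sum>l<r. c l * (P i \<bullet> P l))"
    by (simp add: inner_sum_right)
  also have "\<dots> = (\<Sum>l<r. if l = i then c i else 0)"
    using assms by (intro sum.cong) auto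
  finally show ?thesis
    using assms(2) by simp
qed

lemma inner_sum_orthonormal:
  assumes "orthonormal_upto r P"
  shows "(\<Sum>i<r. c i *\<^sub>R P i) \<bullet> (\<Sum>i<r. d i *\<^sub>R P i) = (\<Sum>i<r. c i * d i)"
  unfolding inner_sum_left inner_scaleR_left
  by (intro sum.cong) (simp_all add: inner_sum_orthonormal_coeff[OF assms])

lemma bessel_inequality:
  assumes "orthonormal_upto r Q"
  shows "(\<Sum>i<r. (v \<bullet> Q i)\<^sup>2) \<le> (norm v)\<^sup>2"
proof -
  define w where "w = (\<Sum>i<r. (v \<bullet> Q i) *\<^sub>R Q i)"
  have "w \<bullet> w = (\<Sum>i<r. (v \<bullet> Q i)\<^sup>2)" "v \<bullet> w = (\<Sum>i<r. (v \<bullet> Q i)\<^sup>2)"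
    unfolding w_def using inner_sum_orthonormal[OF assms]
    by (simp_all add: inner_sum_right power2_eq_square)
  moreover have "0 \<le> (v - w) \<bullet> (v - w)" by simp
  ultimately show ?thesis
    by (simp add: inner_diff_left inner_diff_right inner_commute power2_norm_eq_inner)
qed

lemma sum_inner_mult_orthonormal_le:
  assumes "orthonormal_upto r P" and "orthonormal_upto r Q"
  shows "(\<Sum>i<r. (u \<bullet> P i) * (v \<bullet> Q i)) \<le> norm u * norm v"
proof -
  define w where "w = (\<Sum>i<r. (v \<bullet> Q i) *\<^sub>R P i)"
  have "(norm w)\<^sup>2 = w \<bullet> w"
    by (simp add: power2_norm_eq_inner)
  also have "\<dots> = (\<Sum>i<r. (v \<bullet> Q i)\<^sup>2)"
    using inner_sum_orthonormal[OF assms(1)] by (simp add: w_def power2_eq_square)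
  also have "\<dots> \<le> (norm v)\<^sup>2"
    by (rule bessel_inequality[OF assms(2)])
  finally have "norm w \<le> norm v"
    by (simp add: power2_le_iff_abs_le)
  have "(\<Sum>i<r. (u \<bullet> P i) * (v \<bullet> Q i)) = u \<bullet> w"
    by (simp add: w_def inner_sum_right mult_ac)
  also have "\<dots> \<le> norm u * norm w"
    by (rule norm_cauchy_schwarz)
  also have "\<dots> \<le> norm u * norm v"
    using \<open>norm w \<le> norm v\<close> by (simp add: mult_left_mono)
  finally show ?thesis .
qed

lemma is_svd_matrix_vector_mult:
  assumes "is_svd W r s P Q"
  shows "W *v y = (\<Sum>i<r. (s i * (Q i \<bullet> y)) *\<^sub>R P i)"
  using assms unfolding is_svd_def
  by (simp add: sum_matrix_vector_mult scaleR_matrix_vector_assoc[symmetric] outer_matrix_vector_mult)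

lemma is_svd_inner_left:
  assumes "is_svd W r s P Q" and "i < r"
  shows "P i \<bullet> (W *v y) = s i * (Q i \<bullet> y)"
proof -
  have "orthonormal_upto r P"
    using assms(1) by (simp add: is_svd_def)
  from inner_sum_orthonormal_coeff[OF this assms(2)] show ?thesis
    by (simp add: is_svd_matrix_vector_mult[OF assms(1)])
qed

lemma is_svd_apply_right:
  assumes "is_svd W r s P Q" and "i < r"
  shows "W *v Q i = s i *\<^sub>R P i"
proof -
  have "W *v Q i = (\<Sum>l<r. if l = i then s i *\<^sub>R P i else 0)"
    unfolding is_svd_matrix_vector_mult[OF assms(1)]
    using assms unfolding is_svd_def by (intro sum.cong) auto
  then show ?thesis using assms(2) by simp
qed

lemma is_svd_sum_le_sum_norm_mult:
  assumes "is_svd W r s P Q" and "finite J" and "W = (\<Sum>j\<in>J. outer (u j) (v j))"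
  shows "(\<Sum>i<r. s i) \<le> (\<Sum>j\<in>J. norm (u j) * norm (v j))"
proof -
  have "s i = (\<Sum>j\<in>J. (u j \<bullet> P i) * (v j \<bullet> Q i))" if "i < r" for i
  proof -
    have "P i \<bullet> P i = 1"
      using assms(1) that by (simp add: is_svd_def)
    then have "s i = P i \<bullet> (W *v Q i)"
      by (simp add: is_svd_apply_right[OF assms(1) that])
    also have "\<dots> = (\<Sum>j\<in>J. (u j \<bullet> P i) * (v j \<bullet> Q i))"
      by (simp add: assms(3) sum_matrix_vector_mult outer_matrix_vector_mult inner_sum_right
          inner_commute mult_ac)
    finally show ?thesis .
  qed
  then have "(\<Sum>i<r. s i) = (\<Sum>j\<in>J. \<Sum>i<r. (u j \<bullet> P i) * (v j \<bullet> Q i))"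
    by (simp add: sum.swap[of _ J])
  also have "\<dots> \<le> (\<Sum>j\<in>J. norm (u j) * norm (v j))"
    using assms(1) unfolding is_svd_def by (intro sum_mono sum_inner_mult_orthonormal_le) auto
  finally show ?thesis .
qed

lemma is_svd_sum_le:
  assumes "is_svd W r s P Q" and "is_svd W r' s' P' Q'"
  shows "(\<Sum>i<r. s i) \<le> (\<Sum>i<r'. s' i)"
proof -
  have "W = (\<Sum>i<r'. outer (s' i *\<^sub>R P' i) (Q' i))"
    using assms(2) by (simp add: is_svd_def outer_scaleR_left)
  then have "(\<Sum>i<r. s i) \<le> (\<Sum>i<r'. norm (s' i *\<^sub>R P' i) * norm (Q' i))"
    by (rule is_svd_sum_le_sum_norm_mult[OF assms(1) finite_lessThan])
  also have "\<dots> = (\<Sum>i<r'. s' i)"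
    using assms(2) by (intro sum.cong) (auto simp: is_svd_def norm_eq_sqrt_inner)
  finally show ?thesis .
qed

lemma nuclear_norm_eq:
  assumes "is_svd W r s P Q"
  shows "nuclear_norm W = (\<Sum>i<r. s i)"
  unfolding nuclear_norm_def
proof (rule the_equality)
  show "\<exists>r' s' P' Q'. is_svd W r' s' P' Q' \<and> (\<Sum>i<r. s i) = (\<Sum>i<r'. s' i)"
    using assms by blast
next
  fix t assume "\<exists>r' s' P' Q'. is_svd W r' s' P' Q' \<and> t = (\<Sum>i<r'. s' i)"
  then show "t = (\<Sum>i<r. s i)"
    using is_svd_sum_le assms by (metis order_antisym)
qed

lemma exists_norm_matrix_vector_mult_max:
  fixes A :: "real^'n^'m"
  obtains x where "norm x = 1" and "\<And>z. norm (A *v z) \<le> norm (A *v x) * norm z"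
proof -
  have "continuous_on (sphere 0 1) (\<lambda>x. norm (A *v x))"
    by (intro continuous_on_norm linear_continuous_on) simp
  moreover have "sphere (0::real^'n) 1 \<noteq> {}"
    using norm_axis_1 by (metis mem_sphere_0 empty_iff)
  ultimately obtain x :: "real^'n" where x: "x \<in> sphere 0 1"
    and max: "\<And>y. y \<in> sphere 0 1 \<Longrightarrow> norm (A *v y) \<le> norm (A *v x)"
    using continuous_attains_sup[OF compact_sphere] by metis
  have "norm (A *v z) \<le> norm (A *v x) * norm z" for z
  proof (cases "z = 0")
    case False
    then have "norm (A *v ((1 / norm z) *\<^sub>R z)) \<le> norm (A *v x)"
      by (intro max) simp
    then have "norm (A *v z) / norm z \<le> norm (A *v x)"
      by (simp add: matrix_vector_mult_scaleR divide_inverse mult.commute)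
    then show ?thesis
      using False by (simp add: divide_le_eq mult.commute)
  qed simp
  with x that show ?thesis by simp
qed

lemma image_orthogonal_of_norm_maximizer:
  fixes A :: "real^'n^'m"
  assumes max: "\<And>z. norm (A *v z) \<le> norm (A *v x) * norm z"
    and "x \<bullet> x = 1" and "x \<bullet> y = 0"
  shows "(A *v x) \<bullet> (A *v y) = 0"
proof (rule linear_le_quadratic_imp_zero, intro allI)
  fix t :: real
  define \<sigma> where "\<sigma> = norm (A *v x)"
  have "(norm (A *v (x + t *\<^sub>R y)))\<^sup>2 \<le> (\<sigma> * norm (x + t *\<^sub>R y))\<^sup>2"
    using max unfolding \<sigma>_def by (intro power_mono) auto
  then have "(A *v x + t *\<^sub>R (A *v y)) \<bullet> (A *v x + t *\<^sub>R (A *v y))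
      \<le> \<sigma>\<^sup>2 * ((x + t *\<^sub>R y) \<bullet> (x + t *\<^sub>R y))"
    by (simp add: power2_norm_eq_inner power_mult_distrib matrix_vector_right_distrib
        matrix_vector_mult_scaleR)
  moreover have "(A *v x) \<bullet> (A *v x) = \<sigma>\<^sup>2"
    by (simp add: \<sigma>_def power2_norm_eq_inner)
  ultimately show "2 * t * ((A *v x) \<bullet> (A *v y)) \<le> t\<^sup>2 * (\<sigma>\<^sup>2 * (y \<bullet> y) - (A *v y) \<bullet> (A *v y))"
    using assms(2,3)
    by (simp add: inner_add_left inner_add_right inner_commute power2_eq_square algebra_simps)
qed

definition singular_pair :: "real^'n^'m \<Rightarrow> real \<Rightarrow> real^'n \<Rightarrow> real^'m \<Rightarrow> bool" where
  "singular_pair W \<sigma> x p \<longleftrightarrow> \<sigma> > 0 \<and> x \<bullet> x = 1 \<and> p \<bullet> p = 1 \<and> W *v x = \<sigma> *\<^sub>R p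
     \<and> (\<forall>y. p \<bullet> (W *v y) = \<sigma> * (x \<bullet> y))"

lemma exists_singular_pair:
  fixes W :: "real^'n^'m"
  assumes "W \<noteq> 0"
  obtains \<sigma> x p where "singular_pair W \<sigma> x p"
proof -
  obtain x where "norm x = 1" and max: "\<And>z. norm (W *v z) \<le> norm (W *v x) * norm z"
    using exists_norm_matrix_vector_mult_max[of W] by blast
  define \<sigma> where "\<sigma> = norm (W *v x)"
  have xx: "x \<bullet> x = 1"
    using \<open>norm x = 1\<close> by (simp add: norm_eq_1)
  have "\<sigma> > 0"
  proof (rule ccontr)
    assume "\<not> \<sigma> > 0"
    then have "W *v z = 0 *v z" for z
      using max[of z] by (simp add: \<sigma>_def)
    then show False
      using assms by (simp add: matrix_eq)
  qed
  define p where "p = (1 / \<sigma>) *\<^sub>R (W *v x)"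
  have Wx: "W *v x = \<sigma> *\<^sub>R p" and pp: "p \<bullet> p = 1"
    using \<open>\<sigma> > 0\<close> by (simp_all add: p_def \<sigma>_def dot_square_norm power2_eq_square)
  have "p \<bullet> (W *v y) = \<sigma> * (x \<bullet> y)" for y
  proof -
    define y' where "y' = y - (x \<bullet> y) *\<^sub>R x"
    have "x \<bullet> y' = 0"
      using xx by (simp add: y'_def inner_diff_right)
    then have "(W *v x) \<bullet> (W *v y') = 0"
      by (rule image_orthogonal_of_norm_maximizer[OF max xx])
    moreover have "W *v y = W *v y' + (x \<bullet> y) *\<^sub>R (\<sigma> *\<^sub>R p)"
      by (simp add: y'_def Wx[symmetric] matrix_vector_mult_diff_distrib matrix_vector_mult_scaleR)
    ultimately show ?thesis
      using pp \<open>\<sigma> > 0\<close> by (simp add: Wx inner_add_right)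
  qed
  with \<open>\<sigma> > 0\<close> xx pp Wx have "singular_pair W \<sigma> x p"
    by (simp add: singular_pair_def)
  then show ?thesis ..
qed

lemma deflate_matrix_vector_mult:
  assumes "W *v x = \<sigma> *\<^sub>R p"
  shows "(W - \<sigma> *\<^sub>R outer p x) *v y = W *v (y - (x \<bullet> y) *\<^sub>R x)"
  using assms by (simp add: matrix_vector_mult_diff_rdistrib scaleR_matrix_vector_assoc[symmetric]
      outer_matrix_vector_mult matrix_vector_mult_diff_distrib matrix_vector_mult_scaleR)

lemma rank_deflate_less:
  assumes "singular_pair W \<sigma> x p"
  shows "rank (W - \<sigma> *\<^sub>R outer p x) < rank W"
proof -
  from assms have "\<sigma> > 0" and pp: "p \<bullet> p = 1" and xx: "x \<bullet> x = 1" and Wx: "W *v x = \<sigma> *\<^sub>R p"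
    and pW: "\<And>y. p \<bullet> (W *v y) = \<sigma> * (x \<bullet> y)"
    by (simp_all add: singular_pair_def)
  define W' where "W' = W - \<sigma> *\<^sub>R outer p x"
  have W'_apply: "W' *v y = W *v (y - (x \<bullet> y) *\<^sub>R x)" for y
    unfolding W'_def using Wx by (rule deflate_matrix_vector_mult)
  have "subspace (range ((*v) W'))"
    using linear_subspace_image[OF matrix_vector_mul_linear subspace_UNIV, of W'] by simp
  then have span_W': "span (range ((*v) W')) = range ((*v) W')"
    by (rule span_eq_iff[THEN iffD2])
  have "p \<notin> range ((*v) W')"
  proof
    assume "p \<in> range ((*v) W')"
    then obtain y where "p = W' *v y" by blast
    then have "p \<bullet> p = p \<bullet> (W' *v y)" by simp
    also have "\<dots> = 0"
      using xx by (simp add: W'_apply pW inner_diff_right)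
    finally show False
      using pp by simp
  qed
  then have "p \<notin> span (range ((*v) W'))"
    by (simp add: span_W')
  moreover have "p \<in> span (range ((*v) W))"
    using Wx \<open>\<sigma> > 0\<close> by (intro span_base range_eqI[of _ _ "(1 / \<sigma>) *\<^sub>R x"]) (simp add: matrix_vector_mult_scaleR)
  moreover have "span (range ((*v) W')) \<subseteq> span (range ((*v) W))"
    using W'_apply by (intro span_mono) auto
  ultimately have "span (range ((*v) W')) \<subset> span (range ((*v) W))"
    by blast
  then show ?thesis
    unfolding W'_def[symmetric] rank_dim_range by (rule dim_psubset)
qed

lemma is_svd_extend:
  assumes "is_svd W r s P Q" and "\<sigma> > 0" and "p \<bullet> p = 1" and "x \<bullet> x = 1"
    and "\<And>i. i < r \<Longrightarrow> P i \<bullet> p = 0" and "\<And>i. i < r \<Longrightarrow> Q i \<bullet> x = 0"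
  shows "is_svd (W + \<sigma> *\<^sub>R outer p x) (Suc r) (s(r := \<sigma>)) (P(r := p)) (Q(r := x))"
  using assms unfolding is_svd_def by (auto simp: less_Suc_eq inner_commute)

lemma is_svd_of_deflate:
  assumes pair: "singular_pair W \<sigma> x p" and svd: "is_svd (W - \<sigma> *\<^sub>R outer p x) r s P Q"
  shows "is_svd W (Suc r) (s(r := \<sigma>)) (P(r := p)) (Q(r := x))"
proof -
  from pair have "\<sigma> > 0" and pp: "p \<bullet> p = 1" and xx: "x \<bullet> x = 1" and Wx: "W *v x = \<sigma> *\<^sub>R p"
    and pW: "\<And>y. p \<bullet> (W *v y) = \<sigma> * (x \<bullet> y)"
    by (simp_all add: singular_pair_def)
  have deflate_apply: "(W - \<sigma> *\<^sub>R outer p x) *v y = W *v (y - (x \<bullet> y) *\<^sub>R x)" for y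
    using Wx by (rule deflate_matrix_vector_mult)
  have s_pos: "s i > 0" if "i < r" for i
    using svd that by (simp add: is_svd_def)
  have "P i \<bullet> p = 0" if "i < r" for i
  proof -
    have "s i * (P i \<bullet> p) = p \<bullet> ((W - \<sigma> *\<^sub>R outer p x) *v Q i)"
      using is_svd_apply_right[OF svd that] by (simp add: inner_commute)
    also have "\<dots> = 0"
      by (simp add: deflate_apply pW inner_diff_right xx)
    finally show ?thesis
      using s_pos[OF that] by simp
  qed
  moreover have "Q i \<bullet> x = 0" if "i < r" for i
  proof -
    have "s i * (Q i \<bullet> x) = P i \<bullet> ((W - \<sigma> *\<^sub>R outer p x) *v x)"
      using is_svd_inner_left[OF svd that] by simp
    also have "\<dots> = 0"
      by (simp add: deflate_apply xx)
    finally show ?thesis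
      using s_pos[OF that] by simp
  qed
  ultimately show ?thesis
    using is_svd_extend[OF svd \<open>\<sigma> > 0\<close> pp xx] by simp
qed

lemma svd_exists:
  fixes W :: "real^'n^'m"
  shows "\<exists>r s P Q. is_svd W r s P Q \<and> r \<le> rank W"
proof (induction "rank W" arbitrary: W rule: less_induct)
  case less
  show ?case
  proof (cases "W = 0")
    case True
    then have "is_svd W 0 (\<lambda>_. 0) (\<lambda>_. 0) (\<lambda>_. 0)"
      by (simp add: is_svd_def)
    then show ?thesis by blast
  next
    case False
    then obtain \<sigma> x p where pair: "singular_pair W \<sigma> x p"
      by (rule exists_singular_pair)
    then have rank_less: "rank (W - \<sigma> *\<^sub>R outer p x) < rank W"
      by (rule rank_deflate_less)
    then obtain r s P Q where "is_svd (W - \<sigma> *\<^sub>R outer p x) r s P Q"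
      and "r \<le> rank (W - \<sigma> *\<^sub>R outer p x)"
      using less by blast
    with pair have "is_svd W (Suc r) (s(r := \<sigma>)) (P(r := p)) (Q(r := x))"
      by (simp add: is_svd_of_deflate)
    moreover from \<open>r \<le> rank (W - \<sigma> *\<^sub>R outer p x)\<close> rank_less have "Suc r \<le> rank W"
      by simp
    ultimately show ?thesis
      by blast
  qed
qed

text \<open>For the matrices U, V with columns u j, v j this says U^T U = V^T V.\<close>

definition balanced :: "('k \<Rightarrow> 'a::real_inner) \<Rightarrow> ('k \<Rightarrow> 'b::real_inner) \<Rightarrow> bool" where
  "balanced u v \<longleftrightarrow> (\<forall>i j. u i \<bullet> u j = v i \<bullet> v j)"

definition rotate_pair :: "'k \<Rightarrow> 'k \<Rightarrow> real \<Rightarrow> ('k \<Rightarrow> 'a::real_vector) \<Rightarrow> 'k \<Rightarrow> 'a" where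
  "rotate_pair a b \<theta> u = u(a := cos \<theta> *\<^sub>R u a + sin \<theta> *\<^sub>R u b, b := cos \<theta> *\<^sub>R u b - sin \<theta> *\<^sub>R u a)"

lemma rotate_pair_other [simp]: "j \<noteq> a \<Longrightarrow> j \<noteq> b \<Longrightarrow> rotate_pair a b \<theta> u j = u j"
  by (simp add: rotate_pair_def)

lemma balanced_rotate_pair:
  assumes "balanced u v"
  shows "balanced (rotate_pair a b \<theta> u) (rotate_pair a b \<theta> v)"
proof -
  have gram: "\<And>i j. u i \<bullet> u j = v i \<bullet> v j"
    using assms by (simp add: balanced_def)
  show ?thesis
    unfolding balanced_def rotate_pair_def
    by (simp add: gram inner_add_left inner_add_right inner_diff_left inner_diff_right)
qed

lemma sum_bilinear_rotate_pair:
  fixes u :: "'k::finite \<Rightarrow> 'a::real_vector" and v :: "'k \<Rightarrow> 'b::real_vector"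
  assumes h: "bilinear h" and "a \<noteq> b"
  shows "(\<Sum>j\<in>UNIV. h (rotate_pair a b \<theta> u j) (rotate_pair a b \<theta> v j)) = (\<Sum>j\<in>UNIV. h (u j) (v j))"
proof -
  have split: "(\<Sum>j\<in>UNIV. f j) = f a + f b + (\<Sum>j\<in>UNIV - {a, b}. f j)" for f :: "'k \<Rightarrow> 'c"
    using sum.subset_diff[of "{a, b}" UNIV f] \<open>a \<noteq> b\<close> by (simp add: add.commute)
  have rotation: "h (c *\<^sub>R x1 + s *\<^sub>R x2) (c *\<^sub>R y1 + s *\<^sub>R y2) + h (c *\<^sub>R x2 - s *\<^sub>R x1) (c *\<^sub>R y2 - s *\<^sub>R y1)
      = (c\<^sup>2 + s\<^sup>2) *\<^sub>R (h x1 y1 + h x2 y2)" for c s x1 x2 y1 y2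
    by (simp add: bilinear_ladd[OF h] bilinear_radd[OF h] bilinear_lsub[OF h] bilinear_rsub[OF h]
        bilinear_lmul[OF h] bilinear_rmul[OF h] scaleR_add_left power2_eq_square algebra_simps)
  have "h (rotate_pair a b \<theta> u a) (rotate_pair a b \<theta> v a) + h (rotate_pair a b \<theta> u b) (rotate_pair a b \<theta> v b)
      = h (u a) (v a) + h (u b) (v b)"
    using \<open>a \<noteq> b\<close> rotation[where c = "cos \<theta>" and s = "sin \<theta>"] by (simp add: rotate_pair_def)
  then show ?thesis
    unfolding split[of "\<lambda>j. h (rotate_pair a b \<theta> u j) (rotate_pair a b \<theta> v j)"] split[of "\<lambda>j. h (u j) (v j)"]
    by simp
qed

lemma exists_rotate_pair_inner_eq:
  fixes u :: "'k \<Rightarrow> 'a::real_inner"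
  assumes "a \<noteq> b" and "u b \<bullet> u b \<le> \<mu>" and "\<mu> \<le> u a \<bullet> u a"
  obtains \<theta> where "rotate_pair a b \<theta> u a \<bullet> rotate_pair a b \<theta> u a = \<mu>"
proof -
  define g where "g \<theta> = rotate_pair a b \<theta> u a \<bullet> rotate_pair a b \<theta> u a" for \<theta>
  have g: "g \<theta> = (cos \<theta> *\<^sub>R u a + sin \<theta> *\<^sub>R u b) \<bullet> (cos \<theta> *\<^sub>R u a + sin \<theta> *\<^sub>R u b)" for \<theta>
    using assms(1) by (simp add: g_def rotate_pair_def)
  have "continuous_on {0 .. pi/2} g"
    unfolding g by (intro continuous_intros)
  moreover have "g (pi/2) \<le> \<mu>" and "\<mu> \<le> g 0"
    using assms(2,3) by (simp_all add: g)
  ultimately obtain \<theta> where "g \<theta> = \<mu>"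
    using IVT2'[of g "pi/2" \<mu> 0] by auto
  then show ?thesis
    using that by (simp add: g_def)
qed

lemma balanced_rotate_pair_step:
  fixes u :: "'k::finite \<Rightarrow> real^'m" and v :: "'k \<Rightarrow> real^'n"
  assumes "balanced u v" and a: "\<mu> < u a \<bullet> u a" and b: "u b \<bullet> u b < \<mu>"
  obtains u' :: "'k \<Rightarrow> real^'m" and v' :: "'k \<Rightarrow> real^'n" where "balanced u' v'"
    and "(\<Sum>j\<in>UNIV. outer (u' j) (v' j)) = (\<Sum>j\<in>UNIV. outer (u j) (v j))"
    and "(\<Sum>j\<in>UNIV. u' j \<bullet> u' j) = (\<Sum>j\<in>UNIV. u j \<bullet> u j)"
    and "{j. u' j \<bullet> u' j \<noteq> \<mu>} \<subset> {j. u j \<bullet> u j \<noteq> \<mu>}"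
proof -
  from a b have "a \<noteq> b" by auto
  obtain \<theta> where \<theta>: "rotate_pair a b \<theta> u a \<bullet> rotate_pair a b \<theta> u a = \<mu>"
    using exists_rotate_pair_inner_eq[OF \<open>a \<noteq> b\<close>] a b by (meson less_imp_le)
  define u' where "u' = rotate_pair a b \<theta> u"
  define v' where "v' = rotate_pair a b \<theta> v"
  have "{j. u' j \<bullet> u' j \<noteq> \<mu>} \<subseteq> {j. u j \<bullet> u j \<noteq> \<mu>} - {a}"
  proof
    fix j assume "j \<in> {j. u' j \<bullet> u' j \<noteq> \<mu>}"
    then have "j \<noteq> a" and "u' j \<bullet> u' j \<noteq> \<mu>"
      using \<theta> by (auto simp: u'_def)
    moreover have "u j \<bullet> u j \<noteq> \<mu>"
      using b \<open>j \<noteq> a\<close> \<open>u' j \<bullet> u' j \<noteq> \<mu>\<close> by (cases "j = b") (simp_all add: u'_def)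
    ultimately show "j \<in> {j. u j \<bullet> u j \<noteq> \<mu>} - {a}"
      by simp
  qed
  with a have "{j. u' j \<bullet> u' j \<noteq> \<mu>} \<subset> {j. u j \<bullet> u j \<noteq> \<mu>}"
    by auto
  moreover have "balanced u' v'"
    using assms(1) by (simp add: u'_def v'_def balanced_rotate_pair)
  moreover have "(\<Sum>j\<in>UNIV. outer (u' j) (v' j)) = (\<Sum>j\<in>UNIV. outer (u j) (v j))"
    unfolding u'_def v'_def by (rule sum_bilinear_rotate_pair[OF bilinear_outer \<open>a \<noteq> b\<close>])
  moreover have "(\<Sum>j\<in>UNIV. u' j \<bullet> u' j) = (\<Sum>j\<in>UNIV. u j \<bullet> u j)"
    unfolding u'_def by (rule sum_bilinear_rotate_pair[OF bilinear_inner \<open>a \<noteq> b\<close>])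
  ultimately show ?thesis
    using that by blast
qed

lemma balanced_equalize_norms:
  fixes u :: "'k::finite \<Rightarrow> real^'m" and v :: "'k \<Rightarrow> real^'n"
  assumes "balanced u v" and "(\<Sum>j\<in>UNIV. u j \<bullet> u j) = real CARD('k) * \<mu>"
  shows "\<exists>(u' :: 'k \<Rightarrow> real^'m) (v' :: 'k \<Rightarrow> real^'n). balanced u' v'
    \<and> (\<Sum>j\<in>UNIV. outer (u' j) (v' j)) = (\<Sum>j\<in>UNIV. outer (u j) (v j)) \<and> (\<forall>j. u' j \<bullet> u' j = \<mu>)"
  using assms
proof (induction "card {j. u j \<bullet> u j \<noteq> \<mu>}" arbitrary: u v rule: less_induct)
  case less
  show ?case
  proof (cases "\<forall>j. u j \<bullet> u j = \<mu>")
    case True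
    then show ?thesis
      using less.prems(1) by (intro exI[of _ u] exI[of _ v]) simp
  next
    case False
    then obtain a b where "\<mu> < u a \<bullet> u a" and "u b \<bullet> u b < \<mu>"
      using exists_above_and_below_mean[OF less.prems(2)] by blast
    with less.prems(1) obtain u' :: "'k \<Rightarrow> real^'m" and v' :: "'k \<Rightarrow> real^'n"
      where "balanced u' v'"
        and sum_outer: "(\<Sum>j\<in>UNIV. outer (u' j) (v' j)) = (\<Sum>j\<in>UNIV. outer (u j) (v j))"
        and sum_inner: "(\<Sum>j\<in>UNIV. u' j \<bullet> u' j) = (\<Sum>j\<in>UNIV. u j \<bullet> u j)"
        and fewer: "{j. u' j \<bullet> u' j \<noteq> \<mu>} \<subset> {j. u j \<bullet> u j \<noteq> \<mu>}"
      by (rule balanced_rotate_pair_step)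
    have "card {j. u' j \<bullet> u' j \<noteq> \<mu>} < card {j. u j \<bullet> u j \<noteq> \<mu>}"
      using fewer by (rule psubset_card_mono[OF finite])
    moreover have "(\<Sum>j\<in>UNIV. u' j \<bullet> u' j) = real CARD('k) * \<mu>"
      using sum_inner less.prems(2) by simp
    ultimately obtain u'' :: "'k \<Rightarrow> real^'m" and v'' :: "'k \<Rightarrow> real^'n" where "balanced u'' v''"
      and "(\<Sum>j\<in>UNIV. outer (u'' j) (v'' j)) = (\<Sum>j\<in>UNIV. outer (u' j) (v' j))"
      and "\<forall>j. u'' j \<bullet> u'' j = \<mu>"
      using less.hyps \<open>balanced u' v'\<close> by blast
    with sum_outer show ?thesis
      by (intro exI[of _ u''] exI[of _ v'']) simp
  qed
qed

lemma exists_balanced_factorization: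
  fixes W :: "real^'n^'m"
  assumes svd: "is_svd W r s P Q" and "r \<le> CARD('k::finite)"
  shows "\<exists>(u :: 'k \<Rightarrow> real^'m) (v :: 'k \<Rightarrow> real^'n). balanced u v
    \<and> (\<Sum>j\<in>UNIV. outer (u j) (v j)) = W \<and> (\<Sum>j\<in>UNIV. u j \<bullet> u j) = (\<Sum>i<r. s i)"
proof -
  obtain g :: "'k \<Rightarrow> nat" where g: "bij_betw g UNIV {..<CARD('k)}"
    using ex_bij_betw_finite_nat[of "UNIV :: 'k set"] by (auto simp: atLeast0LessThan)
  have reindex: "(\<Sum>j\<in>UNIV. f (g j)) = (\<Sum>i<r. f i)" if "\<And>i. r \<le> i \<Longrightarrow> f i = 0"
    for f :: "nat \<Rightarrow> 'c::comm_monoid_add"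
  proof -
    have "(\<Sum>j\<in>UNIV. f (g j)) = (\<Sum>i<CARD('k). f i)"
      by (rule sum.reindex_bij_betw[OF g])
    also have "\<dots> = (\<Sum>i<r. f i)"
      using assms(2) that by (intro sum.mono_neutral_cong_right) auto
    finally show ?thesis .
  qed
  have s_pos: "\<And>i. i < r \<Longrightarrow> 0 < s i" and "orthonormal_upto r P" and "orthonormal_upto r Q"
    and W: "W = (\<Sum>i<r. s i *\<^sub>R outer (P i) (Q i))"
    using svd by (auto simp: is_svd_def)
  define p where "p i = (if i < r then sqrt (s i) *\<^sub>R P i else 0)" for i
  define q where "q i = (if i < r then sqrt (s i) *\<^sub>R Q i else 0)" for i
  have "p i \<bullet> p j = q i \<bullet> q j" for i j
    using \<open>orthonormal_upto r P\<close> \<open>orthonormal_upto r Q\<close> by (simp add: p_def q_def)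
  then have "balanced (p \<circ> g) (q \<circ> g)"
    by (simp add: balanced_def)
  moreover have "(\<Sum>j\<in>UNIV. outer ((p \<circ> g) j) ((q \<circ> g) j)) = W"
  proof -
    have "(\<Sum>j\<in>UNIV. outer ((p \<circ> g) j) ((q \<circ> g) j)) = (\<Sum>i<r. outer (p i) (q i))"
      unfolding comp_def by (rule reindex) (simp add: p_def bilinear_lzero[OF bilinear_outer])
    also have "\<dots> = W"
      unfolding W using s_pos
      by (intro sum.cong) (auto simp: p_def q_def outer_scaleR_left outer_scaleR_right less_imp_le)
    finally show ?thesis .
  qed
  moreover have "(\<Sum>j\<in>UNIV. (p \<circ> g) j \<bullet> (p \<circ> g) j) = (\<Sum>i<r. s i)"
  proof -
    have "(\<Sum>j\<in>UNIV. (p \<circ> g) j \<bullet> (p \<circ> g) j) = (\<Sum>i<r. p i \<bullet> p i)"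
      unfolding comp_def by (rule reindex) (simp add: p_def)
    also have "\<dots> = (\<Sum>i<r. s i)"
      using s_pos \<open>orthonormal_upto r P\<close> by (intro sum.cong) (auto simp: p_def less_imp_le)
    finally show ?thesis .
  qed
  ultimately show ?thesis by blast
qed

lemma nuclear_norm_nonneg: "0 \<le> nuclear_norm W"
proof -
  obtain r s P Q where svd: "is_svd W r s P Q"
    using svd_exists by blast
  then show ?thesis
    unfolding nuclear_norm_eq[OF svd] by (auto simp: is_svd_def intro: sum_nonneg less_imp_le)
qed

lemma nuclear_norm_le_sum_norm_mult_columns:
  fixes U :: "real^'k^'m" and V :: "real^'k^'n"
  shows "nuclear_norm (U ** transpose V) \<le> (\<Sum>j\<in>UNIV. norm (column j U) * norm (column j V))"
proof -
  obtain r s P Q where svd: "is_svd (U ** transpose V) r s P Q"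
    using svd_exists by blast
  show ?thesis
    unfolding nuclear_norm_eq[OF svd]
    by (rule is_svd_sum_le_sum_norm_mult[OF svd finite matrix_mult_transpose_eq_sum_outer])
qed

lemma exists_factorization_equal_column_norm_products:
  fixes W :: "real^'n^'m"
  assumes "rank W \<le> CARD('k::finite)"
  obtains U :: "real^'k^'m" and V :: "real^'k^'n" where "U ** transpose V = W"
    and "\<And>j. norm (column j U) * norm (column j V) = nuclear_norm W / real CARD('k)"
proof -
  obtain r s P Q where svd: "is_svd W r s P Q" and "r \<le> rank W"
    using svd_exists by blast
  with assms have "r \<le> CARD('k)"
    by simp
  then obtain u :: "'k \<Rightarrow> real^'m" and v :: "'k \<Rightarrow> real^'n" where "balanced u v"
    and sum_uv: "(\<Sum>j\<in>UNIV. outer (u j) (v j)) = W"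
    and "(\<Sum>j\<in>UNIV. u j \<bullet> u j) = nuclear_norm W"
    using exists_balanced_factorization[OF svd] nuclear_norm_eq[OF svd] by auto
  then have "(\<Sum>j\<in>UNIV. u j \<bullet> u j) = real CARD('k) * (nuclear_norm W / real CARD('k))"
    by simp
  then obtain u' :: "'k \<Rightarrow> real^'m" and v' :: "'k \<Rightarrow> real^'n" where "balanced u' v'"
    and sum_uv': "(\<Sum>j\<in>UNIV. outer (u' j) (v' j)) = (\<Sum>j\<in>UNIV. outer (u j) (v j))"
    and norm_u': "\<And>j. u' j \<bullet> u' j = nuclear_norm W / real CARD('k)"
    using balanced_equalize_norms[OF \<open>balanced u v\<close>] by blast
  define U :: "real^'k^'m" where "U = transpose (\<chi> j. u' j)"
  define V :: "real^'k^'n" where "V = transpose (\<chi> j. v' j)"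
  have columns: "column j U = u' j" "column j V = v' j" for j
    by (simp_all add: U_def V_def row_def vec_eq_iff)
  have "U ** transpose V = W"
    by (simp add: matrix_mult_transpose_eq_sum_outer columns sum_uv' sum_uv)
  moreover have "norm (column j U) * norm (column j V) = nuclear_norm W / real CARD('k)" for j
  proof -
    have "norm (v' j) = norm (u' j)"
      using \<open>balanced u' v'\<close> by (simp add: balanced_def norm_eq_sqrt_inner)
    then show ?thesis
      using norm_u'[of j] by (simp add: columns dot_square_norm power2_eq_square)
  qed
  ultimately show ?thesis using that by blast
qed

lemma obj_eq_sum_power2:
  "obj U V = (\<Sum>j\<in>UNIV. (norm (column j U) * norm (column j V))\<^sup>2)"
  by (simp add: obj_def power_mult_distrib)

lemma square_nuclear_norm_div_card_le_obj:
  fixes U :: "real^'k::finite^'m" and V :: "real^'k^'n"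
  shows "(nuclear_norm (U ** transpose V))\<^sup>2 / real CARD('k) \<le> obj U V"
  using square_div_card_le_sum_power2(2)[OF nuclear_norm_nonneg nuclear_norm_le_sum_norm_mult_columns[of U V]]
  by (simp add: obj_eq_sum_power2)

lemma column_norm_products_eq_of_obj_eq:
  fixes U :: "real^'k::finite^'m" and V :: "real^'k^'n"
  assumes "obj U V = (nuclear_norm (U ** transpose V))\<^sup>2 / real CARD('k)"
  shows "norm (column j U) * norm (column j V) = nuclear_norm (U ** transpose V) / real CARD('k)"
  using sum_power2_eq_square_div_card_imp_const[OF nuclear_norm_nonneg
      nuclear_norm_le_sum_norm_mult_columns[of U V]] assms
  by (simp add: obj_eq_sum_power2)

lemma Fk_eq:
  fixes W :: "real^'n^'m"
  assumes "rank W \<le> CARD('k::finite)"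
  shows "Fk W TYPE('k) = (nuclear_norm W)\<^sup>2 / real CARD('k)"
  unfolding Fk_def
proof (rule cInf_eq_minimum)
  obtain U :: "real^'k^'m" and V :: "real^'k^'n" where "U ** transpose V = W"
    and equal: "\<And>j. norm (column j U) * norm (column j V) = nuclear_norm W / real CARD('k)"
    using exists_factorization_equal_column_norm_products[OF assms] by blast
  moreover have "obj U V = (nuclear_norm W)\<^sup>2 / real CARD('k)"
    by (simp add: obj_eq_sum_power2 equal power2_eq_square)
  ultimately show "(nuclear_norm W)\<^sup>2 / real CARD('k)
      \<in> {obj (U :: real^'k^'m) (V :: real^'k^'n) |U V. U ** transpose V = W}"
    by (intro CollectI exI[of _ U] exI[of _ V]) simp
next
  fix y assume "y \<in> {obj (U :: real^'k^'m) (V :: real^'k^'n) |U V. U ** transpose V = W}"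
  then obtain U :: "real^'k^'m" and V :: "real^'k^'n" where "y = obj U V" and "U ** transpose V = W"
    by blast
  then show "(nuclear_norm W)\<^sup>2 / real CARD('k) \<le> y"
    using square_nuclear_norm_div_card_le_obj[of U V] by simp
qed

theorem lemmaB5:
  fixes W :: "real^'n^'m"
  assumes "rank W \<le> CARD('k::finite)"
  shows "Fk W TYPE('k) = (nuclear_norm W)\<^sup>2 / real CARD('k)
    \<and> (\<exists>(U::real^'k^'m) (V::real^'k^'n). U ** transpose V = W \<and> obj U V = Fk W TYPE('k))
    \<and> (\<forall>(U::real^'k^'m) (V::real^'k^'n).
          U ** transpose V = W \<and> obj U V = Fk W TYPE('k) \<longrightarrow>
            (\<forall>j. norm (column j U) * norm (column j V) = nuclear_norm W / real CARD('k))
            \<and> (\<Sum>j\<in>UNIV. norm (column j U) * norm (column j V)) = nuclear_norm W)"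
proof -
  let ?N = "nuclear_norm W" and ?K = "real CARD('k)"
  obtain U0 :: "real^'k^'m" and V0 :: "real^'k^'n" where "U0 ** transpose V0 = W"
    and equal0: "\<And>j. norm (column j U0) * norm (column j V0) = ?N / ?K"
    using exists_factorization_equal_column_norm_products[OF assms] by blast
  moreover have Fk: "Fk W TYPE('k) = ?N\<^sup>2 / ?K"
    by (rule Fk_eq[OF assms])
  moreover have "obj U0 V0 = ?N\<^sup>2 / ?K"
    by (simp add: obj_eq_sum_power2 equal0 power2_eq_square)
  moreover have "(\<forall>j. norm (column j U) * norm (column j V) = ?N / ?K)
      \<and> (\<Sum>j\<in>UNIV. norm (column j U) * norm (column j V)) = ?N"
    if "U ** transpose V = W" and "obj U V = Fk W TYPE('k)" for U :: "real^'k^'m" and V :: "real^'k^'n"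
    using column_norm_products_eq_of_obj_eq[of U V] that Fk by simp
  ultimately show ?thesis
    by auto
qed

end
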